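(* Let $G$ be a finite group, $H\leq G$ a subgroup of index $n$, and $T=\{t_1,\ldots,t_n\}$ a right transversal to $H$ in $G$ with $t_1=1$. For $g\in G$ write $g=\mathsf{H}(g)\mathsf{T}(g)$ with $\mathsf{H}(g)\in H$ and $\mathsf{T}(g)\in T$ (uniquely determined). Let $\chi$ be a linear character of $H$, let $\chi^+$ be its extension to $G$ by $0$ outside $H$, and let $\rho$ be the representation $\rho(g)=[\chi^+(t_igt_k^{-1})]_{i,k}$ of $G$. Put $\chi_{\mathsf{H}}(g)=\chi(\mathsf{H}(g))$ for $g\in G$. Let $M$ be an $n\times n$ complex matrix whose rows and columns are labelled by $T$ (in the order $t_1,\ldots,t_n$), and write $m(s,t)$ for the entry in row $s$ and column $t$. Then $M$ lies in the centraliser algebra $\mathrm{C}(\rho)=\{X\in M_n(\mathbb{C}) : X\rho(g)=\rho(g)X \text{ for all } g\in G\}$ if and only if for all $g\in G$ and $t\in T$, \[ m(\mathsf{T}(g),\mathsf{T}(tg)) = m(1,t)\,\chi_{\mathsf{H}}(g)^{-1}\,\chi_{\mathsf{H}}(tg).\]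
   Context: A right transversal $T$ to $H$ in $G$ is a set such that every $g\in G$ factorises uniquely as $g=ht$ with $h\in H$, $t\in T$. Here $1=t_1\in T$ is the identity element, labelling the coset $H$. *)

theory Defs
  imports Complex_Main "HOL-Algebra.Algebra"
begin

definition right_transversal :: "('a, 'b) monoid_scheme \<Rightarrow> 'a set \<Rightarrow> 'a set \<Rightarrow> bool" where
  "right_transversal G H T \<longleftrightarrow> T \<subseteq> carrier G \<and>
     (\<forall>g\<in>carrier G. \<exists>!p. fst p \<in> H \<and> snd p \<in> T \<and> g = fst p \<otimes>\<^bsub>G\<^esub> snd p)"

definition Hpart :: "('a, 'b) monoid_scheme \<Rightarrow> 'a set \<Rightarrow> 'a set \<Rightarrow> 'a \<Rightarrow> 'a" where
  "Hpart G H T g = fst (THE p. fst p \<in> H \<and> snd p \<in> T \<and> g = fst p \<otimes>\<^bsub>G\<^esub> snd p)"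

definition Tpart :: "('a, 'b) monoid_scheme \<Rightarrow> 'a set \<Rightarrow> 'a set \<Rightarrow> 'a \<Rightarrow> 'a" where
  "Tpart G H T g = snd (THE p. fst p \<in> H \<and> snd p \<in> T \<and> g = fst p \<otimes>\<^bsub>G\<^esub> snd p)"

definition linear_character :: "('a, 'b) monoid_scheme \<Rightarrow> 'a set \<Rightarrow> ('a \<Rightarrow> complex) \<Rightarrow> bool" where
  "linear_character G H \<chi> \<longleftrightarrow> (\<forall>x\<in>H. \<chi> x \<noteq> 0) \<and>
     (\<forall>x\<in>H. \<forall>y\<in>H. \<chi> (x \<otimes>\<^bsub>G\<^esub> y) = \<chi> x * \<chi> y)"

definition chi_plus :: "'a set \<Rightarrow> ('a \<Rightarrow> complex) \<Rightarrow> 'a \<Rightarrow> complex" where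
  "chi_plus H \<chi> x = (if x \<in> H then \<chi> x else 0)"

text \<open>The induced representation, as a matrix with rows and columns labelled by T.\<close>
definition rho :: "('a, 'b) monoid_scheme \<Rightarrow> 'a set \<Rightarrow> ('a \<Rightarrow> complex) \<Rightarrow> 'a \<Rightarrow> 'a \<Rightarrow> 'a \<Rightarrow> complex" where
  "rho G H \<chi> g s t = chi_plus H \<chi> (s \<otimes>\<^bsub>G\<^esub> g \<otimes>\<^bsub>G\<^esub> m_inv G t)"

definition tmat_mult :: "'a set \<Rightarrow> ('a \<Rightarrow> 'a \<Rightarrow> complex) \<Rightarrow> ('a \<Rightarrow> 'a \<Rightarrow> complex) \<Rightarrow> 'a \<Rightarrow> 'a \<Rightarrow> complex" where
  "tmat_mult T A B i j = sum (\<lambda>k. A i k * B k j) T"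

definition in_centraliser :: "('a, 'b) monoid_scheme \<Rightarrow> 'a set \<Rightarrow> 'a set \<Rightarrow> ('a \<Rightarrow> complex) \<Rightarrow> ('a \<Rightarrow> 'a \<Rightarrow> complex) \<Rightarrow> bool" where
  "in_centraliser G H T \<chi> M \<longleftrightarrow> (\<forall>g\<in>carrier G. \<forall>s\<in>T. \<forall>u\<in>T.
     tmat_mult T M (rho G H \<chi> g) s u = tmat_mult T (rho G H \<chi> g) M s u)"

end

theory Submission
  imports Defs
begin

text \<open>
  Write \<open>g = H(g) T(g)\<close>. The entry \<open>\<chi>\<^sup>+(s g u\<inverse>)\<close> of \<open>\<rho>(g)\<close> is nonzero exactly when
  \<open>u = T(s g)\<close>, and then it equals \<open>\<chi>(H(s g))\<close>: \<open>\<rho>(g)\<close> is the permutation matrix of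
  \<open>s \<mapsto> T(s g)\<close> weighted by \<open>\<chi>\<^sub>H\<close>. Comparing \<open>\<rho>(g) M\<close> with \<open>M \<rho>(g)\<close> in the
  columns \<open>T(v g)\<close>, which run through all of \<open>T\<close>, shows that \<open>M\<close> commutes with every \<open>\<rho>(g)\<close>
  iff \<open>m(T(s g), T(v g)) = m(s, v) \<chi>\<^sub>H(s g)\<inverse> \<chi>\<^sub>H(v g)\<close> for all \<open>g\<close> and \<open>s, v \<in> T\<close>.
  The theorem is the case \<open>s = 1\<close>; conversely, the general case is the quotient of two
  instances of the case \<open>s = 1\<close> (for \<open>g\<close> and for \<open>s g\<close>, both with \<open>t = T(v s\<inverse>)\<close>),
  by the identity \<open>T(T(y) x) = T(y x)\<close>.
\<close>

definition monomial_invariant ::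
    "('a, 'b) monoid_scheme \<Rightarrow> 'a set \<Rightarrow> 'a set \<Rightarrow> ('a \<Rightarrow> complex) \<Rightarrow> ('a \<Rightarrow> 'a \<Rightarrow> complex) \<Rightarrow> bool"
  where "monomial_invariant G H T \<chi> M \<longleftrightarrow> (\<forall>g\<in>carrier G. \<forall>s\<in>T. \<forall>v\<in>T.
     M (Tpart G H T (s \<otimes>\<^bsub>G\<^esub> g)) (Tpart G H T (v \<otimes>\<^bsub>G\<^esub> g)) =
     M s v * inverse (\<chi> (Hpart G H T (s \<otimes>\<^bsub>G\<^esub> g))) * \<chi> (Hpart G H T (v \<otimes>\<^bsub>G\<^esub> g)))"

locale subgroup_transversal = group G for G (structure) +
  fixes H T :: "'a set"
  assumes subgroup: "subgroup H G"
    and transversal: "right_transversal G H T"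
begin

abbreviation "hp \<equiv> Hpart G H T"
abbreviation "tp \<equiv> Tpart G H T"

lemma subgroup_subset: "H \<subseteq> carrier G"
  using subgroup by (rule subgroup.subset)

lemma transversal_subset: "T \<subseteq> carrier G"
  using transversal by (simp add: right_transversal_def)

lemma Hpart_Tpart:
  assumes "g \<in> carrier G"
  shows "hp g \<in> H" "tp g \<in> T" "g = hp g \<otimes> tp g"
proof -
  let ?P = "\<lambda>p. fst p \<in> H \<and> snd p \<in> T \<and> g = fst p \<otimes> snd p"
  have "\<exists>!p. ?P p" using transversal assms by (simp add: right_transversal_def)
  then have "?P (THE p. ?P p)" by (rule theI')
  then show "hp g \<in> H" "tp g \<in> T" "g = hp g \<otimes> tp g" by (simp_all add: Hpart_def Tpart_def)
qed

lemma Hpart_closed: "g \<in> carrier G \<Longrightarrow> hp g \<in> carrier G"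
  using Hpart_Tpart subgroup_subset by blast

lemma Tpart_closed: "g \<in> carrier G \<Longrightarrow> tp g \<in> carrier G"
  using Hpart_Tpart transversal_subset by blast

lemma Hpart_Tpart_unique:
  assumes "h \<in> H" "t \<in> T" "g = h \<otimes> t"
  shows "hp g = h" "tp g = t"
proof -
  let ?P = "\<lambda>p. fst p \<in> H \<and> snd p \<in> T \<and> g = fst p \<otimes> snd p"
  have "g \<in> carrier G" using assms subgroup_subset transversal_subset by blast
  then have "\<exists>!p. ?P p" using transversal by (simp add: right_transversal_def)
  moreover have "?P (h, t)" using assms by simp
  ultimately have "(THE p. ?P p) = (h, t)" by (rule the1_equality)
  then show "hp g = h" "tp g = t" by (simp_all add: Hpart_def Tpart_def)
qed

lemma Hpart_eq:
  assumes x: "x \<in> carrier G"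
  shows "hp x = x \<otimes> inv (tp x)"
  using inv_solve_right[OF Hpart_closed[OF x] x Tpart_closed[OF x]] Hpart_Tpart(3)[OF x, symmetric]
  by simp

lemma Tpart_iff:
  assumes x: "x \<in> carrier G" and t: "t \<in> T"
  shows "x \<otimes> inv t \<in> H \<longleftrightarrow> t = tp x"
proof
  assume xt: "x \<otimes> inv t \<in> H"
  have "x = (x \<otimes> inv t) \<otimes> t"
    using x t transversal_subset by (auto simp: m_assoc)
  then show "t = tp x" using Hpart_Tpart_unique(2)[OF xt t] by simp
next
  assume "t = tp x"
  then show "x \<otimes> inv t \<in> H" using Hpart_eq[OF x] Hpart_Tpart(1)[OF x] by simp
qed

lemma Hpart_Tpart_of_transversal:
  assumes t: "t \<in> T"
  shows "hp t = \<one>" "tp t = t"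
proof -
  have "\<one> \<in> H" using subgroup by (rule subgroup.one_closed)
  moreover have "t = \<one> \<otimes> t" using t transversal_subset by auto
  ultimately show "hp t = \<one>" "tp t = t" using Hpart_Tpart_unique t by blast+
qed

lemma Hpart_Tpart_left_mult:
  assumes h: "h \<in> H" and x: "x \<in> carrier G"
  shows "hp (h \<otimes> x) = h \<otimes> hp x" "tp (h \<otimes> x) = tp x"
proof -
  have "h \<in> carrier G" using h subgroup_subset by blast
  then have "h \<otimes> x = (h \<otimes> hp x) \<otimes> tp x"
    using Hpart_closed[OF x] Tpart_closed[OF x] Hpart_Tpart(3)[OF x, symmetric] by (simp add: m_assoc)
  moreover have "h \<otimes> hp x \<in> H"
    using subgroup h Hpart_Tpart(1)[OF x] by (rule subgroup.m_closed)
  ultimately show "hp (h \<otimes> x) = h \<otimes> hp x" "tp (h \<otimes> x) = tp x"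
    using Hpart_Tpart_unique Hpart_Tpart(2)[OF x] by blast+
qed

lemma Hpart_Tpart_mult_Tpart:
  assumes y: "y \<in> carrier G" and x: "x \<in> carrier G"
  shows "hp (tp y \<otimes> x) = inv (hp y) \<otimes> hp (y \<otimes> x)" "tp (tp y \<otimes> x) = tp (y \<otimes> x)"
proof -
  have "tp y = inv (hp y) \<otimes> y"
    using inv_solve_left[OF Tpart_closed[OF y] Hpart_closed[OF y] y] Hpart_Tpart(3)[OF y, symmetric]
    by simp
  then have "tp y \<otimes> x = inv (hp y) \<otimes> (y \<otimes> x)"
    using y x Hpart_closed[OF y] by (simp add: m_assoc)
  moreover have "inv (hp y) \<in> H"
    using subgroup Hpart_Tpart(1)[OF y] by (rule subgroup.m_inv_closed)
  ultimately show "hp (tp y \<otimes> x) = inv (hp y) \<otimes> hp (y \<otimes> x)" "tp (tp y \<otimes> x) = tp (y \<otimes> x)"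
    using Hpart_Tpart_left_mult y x by simp_all
qed

lemma Tpart_Tpart_mult_inv:
  assumes k: "k \<in> T" and g: "g \<in> carrier G"
  shows "tp (tp (k \<otimes> g) \<otimes> inv g) = k"
proof -
  have "k \<in> carrier G" using k transversal_subset by blast
  then have "tp (tp (k \<otimes> g) \<otimes> inv g) = tp k"
    using Hpart_Tpart_mult_Tpart(2) g by (simp add: m_assoc)
  then show ?thesis using Hpart_Tpart_of_transversal(2)[OF k] by simp
qed

lemma Tpart_mult_right_surj:
  assumes g: "g \<in> carrier G" and u: "u \<in> T"
  shows "\<exists>v\<in>T. u = tp (v \<otimes> g)"
proof
  show "u = tp (tp (u \<otimes> inv g) \<otimes> g)"
    using Tpart_Tpart_mult_inv[OF u, of "inv g"] g by simp
  show "tp (u \<otimes> inv g) \<in> T"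
    using u g transversal_subset Hpart_Tpart(2) by auto
qed

end

locale monomial_representation = subgroup_transversal +
  fixes \<chi> :: "'a \<Rightarrow> complex"
  assumes finite_transversal: "finite T"
    and character: "linear_character G H \<chi>"
begin

lemma character_nonzero: "h \<in> H \<Longrightarrow> \<chi> h \<noteq> 0"
  using character by (simp add: linear_character_def)

lemma character_mult: "h \<in> H \<Longrightarrow> k \<in> H \<Longrightarrow> \<chi> (h \<otimes> k) = \<chi> h * \<chi> k"
  using character by (simp add: linear_character_def)

lemma character_one: "\<chi> \<one> = 1"
proof -
  have one: "\<one> \<in> H" using subgroup by (rule subgroup.one_closed)
  then have "\<chi> \<one> = \<chi> \<one> * \<chi> \<one>" using character_mult[OF one one] by simp
  then show ?thesis using character_nonzero[OF one] by simp
qed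

lemma character_inv:
  assumes h: "h \<in> H"
  shows "\<chi> (inv h) = inverse (\<chi> h)"
proof -
  have "inv h \<in> H" using subgroup h by (rule subgroup.m_inv_closed)
  then have "\<chi> (inv h) * \<chi> h = 1"
    using character_mult h subgroup_subset character_one by (metis l_inv subsetD)
  then show ?thesis by (metis inverse_unique mult.commute)
qed

lemma rho_monomial:
  assumes s: "s \<in> carrier G" and g: "g \<in> carrier G" and u: "u \<in> T"
  shows "rho G H \<chi> g s u = (if u = tp (s \<otimes> g) then \<chi> (hp (s \<otimes> g)) else 0)"
proof -
  have sg: "s \<otimes> g \<in> carrier G" using s g by simp
  show ?thesis
    using Tpart_iff[OF sg u] Hpart_eq[OF sg] by (auto simp: rho_def chi_plus_def)
qed

lemma rho_tmat_mult:
  assumes s: "s \<in> carrier G" and g: "g \<in> carrier G"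
  shows "tmat_mult T (rho G H \<chi> g) M s u = \<chi> (hp (s \<otimes> g)) * M (tp (s \<otimes> g)) u"
proof -
  have sg: "s \<otimes> g \<in> carrier G" using s g by simp
  have "tmat_mult T (rho G H \<chi> g) M s u =
      (\<Sum>k\<in>T. if k = tp (s \<otimes> g) then \<chi> (hp (s \<otimes> g)) * M k u else 0)"
    unfolding tmat_mult_def using rho_monomial[OF s g] by (intro sum.cong) auto
  then show ?thesis using finite_transversal Hpart_Tpart(2)[OF sg] by simp
qed

lemma tmat_mult_rho_Tpart:
  assumes g: "g \<in> carrier G" and v: "v \<in> T"
  shows "tmat_mult T M (rho G H \<chi> g) s (tp (v \<otimes> g)) = M s v * \<chi> (hp (v \<otimes> g))"
proof -
  have "tp (v \<otimes> g) = tp (k \<otimes> g) \<longleftrightarrow> k = v" if k: "k \<in> T" for k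
    using Tpart_Tpart_mult_inv[OF k g] Tpart_Tpart_mult_inv[OF v g] by metis
  moreover have "k \<in> carrier G" if "k \<in> T" for k
    using that transversal_subset by blast
  ultimately have "tmat_mult T M (rho G H \<chi> g) s (tp (v \<otimes> g)) =
      (\<Sum>k\<in>T. if k = v then M s v * \<chi> (hp (v \<otimes> g)) else 0)"
    unfolding tmat_mult_def using rho_monomial g v Hpart_Tpart(2)
    by (intro sum.cong) auto
  then show ?thesis using finite_transversal v by simp
qed

lemma in_centraliser_iff_monomial_invariant:
  "in_centraliser G H T \<chi> M \<longleftrightarrow> monomial_invariant G H T \<chi> M"
proof -
  have "tmat_mult T M (rho G H \<chi> g) s (tp (v \<otimes> g)) = tmat_mult T (rho G H \<chi> g) M s (tp (v \<otimes> g))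
      \<longleftrightarrow> M (tp (s \<otimes> g)) (tp (v \<otimes> g)) =
          M s v * inverse (\<chi> (hp (s \<otimes> g))) * \<chi> (hp (v \<otimes> g))"
    if g: "g \<in> carrier G" and s: "s \<in> T" and v: "v \<in> T" for g s v
  proof -
    have s': "s \<in> carrier G" using s transversal_subset by blast
    have "\<chi> (hp (s \<otimes> g)) \<noteq> 0"
      using character_nonzero Hpart_Tpart(1) s' g by simp
    then show ?thesis
      using tmat_mult_rho_Tpart[OF g v] rho_tmat_mult[OF s' g] by (auto simp: field_simps)
  qed
  moreover have "tp (v \<otimes> g) \<in> T" if "g \<in> carrier G" "v \<in> T" for g v
    using that transversal_subset Hpart_Tpart(2) by blast
  ultimately show ?thesis
    unfolding in_centraliser_def monomial_invariant_def using Tpart_mult_right_surj by metis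
qed

lemma monomial_invariant_iff_first_row:
  assumes one: "\<one> \<in> T"
  shows "monomial_invariant G H T \<chi> M \<longleftrightarrow>
    (\<forall>g\<in>carrier G. \<forall>t\<in>T.
       M (tp g) (tp (t \<otimes> g)) = M \<one> t * inverse (\<chi> (hp g)) * \<chi> (hp (t \<otimes> g)))"
  (is "_ \<longleftrightarrow> (\<forall>g\<in>carrier G. \<forall>t\<in>T. ?P g t)")
proof
  assume "monomial_invariant G H T \<chi> M"
  then show "\<forall>g\<in>carrier G. \<forall>t\<in>T. ?P g t"
    unfolding monomial_invariant_def using one by force
next
  assume P: "\<forall>g\<in>carrier G. \<forall>t\<in>T. ?P g t"
  show "monomial_invariant G H T \<chi> M"
    unfolding monomial_invariant_def
  proof (intro ballI)
    fix g s v assume g: "g \<in> carrier G" and s: "s \<in> T" and v: "v \<in> T"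
    have s': "s \<in> carrier G" and v': "v \<in> carrier G" using s v transversal_subset by blast+
    have sg: "s \<otimes> g \<in> carrier G" and vg: "v \<otimes> g \<in> carrier G" using s' v' g by simp_all
    define y where "y = v \<otimes> inv s"
    have y: "y \<in> carrier G" and ys: "y \<otimes> s = v" using s' v' by (simp_all add: y_def m_assoc)
    then have ysg: "y \<otimes> (s \<otimes> g) = v \<otimes> g" using s' g by (simp add: m_assoc[symmetric])
    have t: "tp y \<in> T" and hy: "hp y \<in> H" using Hpart_Tpart[OF y] by simp_all
    have hy_inv: "inv (hp y) \<in> H" using subgroup hy by (rule subgroup.m_inv_closed)
    have "M s v = M \<one> (tp y) * inverse (\<chi> (hp y))"
      using P[rule_format, OF s' t] Hpart_Tpart_mult_Tpart[OF y s'] ys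
        Hpart_Tpart_of_transversal[OF s] Hpart_Tpart_of_transversal[OF v]
        character_one character_inv[OF hy] Hpart_closed[OF y]
      by simp
    moreover have "M (tp (s \<otimes> g)) (tp (v \<otimes> g)) =
        M \<one> (tp y) * inverse (\<chi> (hp (s \<otimes> g))) * (inverse (\<chi> (hp y)) * \<chi> (hp (v \<otimes> g)))"
      using P[rule_format, OF sg t] Hpart_Tpart_mult_Tpart[OF y sg] ysg
        character_mult[OF hy_inv Hpart_Tpart(1)[OF vg]] character_inv[OF hy]
      by simp
    ultimately show "M (tp (s \<otimes> g)) (tp (v \<otimes> g)) =
        M s v * inverse (\<chi> (hp (s \<otimes> g))) * \<chi> (hp (v \<otimes> g))"
      by (simp add: ac_simps)
  qed
qed

end

theorem proposition3p2:
  fixes G (structure) and H T :: "'a set" and \<chi> :: "'a \<Rightarrow> complex" and M :: "'a \<Rightarrow> 'a \<Rightarrow> complex"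
  assumes "group G" and "finite (carrier G)" and "subgroup H G"
    and "right_transversal G H T" and "\<one> \<in> T"
    and "linear_character G H \<chi>"
  shows "in_centraliser G H T \<chi> M \<longleftrightarrow>
    (\<forall>g\<in>carrier G. \<forall>t\<in>T.
       M (Tpart G H T g) (Tpart G H T (t \<otimes> g)) =
       M \<one> t * inverse (\<chi> (Hpart G H T g)) * \<chi> (Hpart G H T (t \<otimes> g)))"
proof -
  have "finite T"
    using assms(2,4) by (auto simp: right_transversal_def intro: finite_subset)
  then interpret monomial_representation G H T \<chi>
    using assms by (simp add: monomial_representation_def monomial_representation_axioms_def
        subgroup_transversal_def subgroup_transversal_axioms_def)
  show ?thesis
    using in_centraliser_iff_monomial_invariant monomial_invariant_iff_first_row[OF assms(5)] by simp
qed

end
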